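(* Let $\mathcal M=(S,A,P,R)$ be an MDP with rewards, $\mathrm{Bad}\subset S$ a set of sink states, $s_0\in S$ with $\mathrm{Val}(s_0)>0$, and $\mathcal M'$ the pruned MDP. Let $\sigma^*$ be a strategy of $\mathcal M'$ maximizing $\mathbb E'_{\sigma,s_0}(\mathsf{MP})$ over all strategies $\sigma$ of $\mathcal M'$. Then (1) $\Pr_{\sigma^*,s_0}(\Box\neg\mathrm{Bad})=\mathrm{Val}(s_0)$, and (2) $\mathbb E_{\sigma^*,s_0}(\mathsf{MP}\mid\Box\neg\mathrm{Bad})=\max_{\sigma\in\Sigma_{\mathcal M,s_0}(\Box\neg\mathrm{Bad})}\mathbb E_{\sigma,s_0}(\mathsf{MP}\mid\Box\neg\mathrm{Bad})$.
   Context: An MDP with rewards is $\mathcal M=(S,A,P,R)$ with $S,A$ finite, $P$ a partial map $S\times A\to\mathrm{Dist}(S)$ and $R:S\times A\to\mathbb R$; $a$ is legal at $s$ if $P(s,a)$ is defined; $P(s,a,s')=P(s,a)(s')$. A strategy maps finite paths to distributions over legal actions at the last state (history-dependent, randomized); $\Pr_{\sigma,s}$, $\mathbb E_{\sigma,s}$ are the induced probability measure and expectation on infinite paths from $s$. States in $\mathrm{Bad}$ are sinks (single legal action, self-loop with probability 1); $\Box\neg\mathrm{Bad}$ is the event of never visiting $\mathrm{Bad}$; $\mathrm{Val}(s)=\max_\sigma\Pr_{\sigma,s}(\Box\neg\mathrm{Bad})$; $\Sigma_{\mathcal M,s}(\Box\neg\mathrm{Bad})$ is the set of strategies attaining $\mathrm{Val}(s)$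 from $s$. For a path $s_0a_0s_1a_1\dots$, $\mathrm{Reward}_n=\sum_{i=0}^{n-1}R(s_i,a_i)$. $\mathbb E_{\sigma,s}(\mathsf{MP}\mid\Box\neg\mathrm{Bad})=\liminf_{n\to\infty}\frac1n\mathbb E_{\sigma,s}(\mathrm{Reward}_n\cdot\mathbf 1_{\Box\neg\mathrm{Bad}})/\Pr_{\sigma,s}(\Box\neg\mathrm{Bad})$, and in any MDP $\mathbb E_{\sigma,s}(\mathsf{MP})=\liminf_{n\to\infty}\frac1n\mathbb E_{\sigma,s}(\mathrm{Reward}_n)$. $\mathrm{Opt}_{\mathcal M}=\{(s,a): a\text{ legal at }s,\ \mathrm{Val}(s)=\sum_{s'}P(s,a,s')\mathrm{Val}(s')\}$. The pruned MDP $\mathcal M'=(S',A,P',R')$ has $S'=\{s:\mathrm{Val}(s)>0\}$, $R'=R$ restricted to $S'$, and $P'(s,a,s')=P(s,a,s')\mathrm{Val}(s')/\mathrm{Val}(s)$ if $s\in S'$ and $(s,a)\in\mathrm{Opt}_{\mathcal M}$ (undefined otherwise). Strategies of $\mathcal M'$ are identified with strategies of $\mathcal M$ that after every finite path $\rho$ only play actions $a$ with $(\mathrm{last}(\rho),a)\in\mathrm{Opt}_{\mathcal M}$; $\mathbb E'_{\sigma,s}$ is the expectation in $\mathcal M'$ (with rewards $R'$). *)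

theory Defs
  imports "HOL-Probability.Probability"
begin

text \<open>
  The transition function is a partial map  P :: 's => 'a => 's pmf option
  (action a is legal at s iff P s a is defined).
  A (history-dependent, randomized) strategy receives the finite path
  s_0 a_0 ... s_(n-1) a_(n-1) s_n, given as the list of pairs (s_i,a_i), i<n,
  together with the last state s_n, and returns a distribution over actions.
\<close>

type_synonym ('s, 'a) strategy = "('s \<times> 'a) list \<Rightarrow> 's \<Rightarrow> 'a pmf"

definition legal :: "('s \<Rightarrow> 'a \<Rightarrow> 's pmf option) \<Rightarrow> 's \<Rightarrow> 'a \<Rightarrow> bool" where
  "legal P s a \<longleftrightarrow> P s a \<noteq> None"

definition is_strategy :: "('s \<Rightarrow> 'a \<Rightarrow> 's pmf option) \<Rightarrow> ('s, 'a) strategy \<Rightarrow> bool" where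
  "is_strategy P \<sigma> \<longleftrightarrow> (\<forall>h s. set_pmf (\<sigma> h s) \<subseteq> {a. legal P s a})"

definition step_kernel ::
  "('s \<Rightarrow> 'a \<Rightarrow> 's pmf) \<Rightarrow> ('s, 'a) strategy \<Rightarrow> 's \<Rightarrow> nat \<Rightarrow> (nat \<Rightarrow> 's \<times> 'a) \<Rightarrow> ('s \<times> 'a) measure"
where
  "step_kernel T \<sigma> s0 i \<omega> =
     (if i = 0 then measure_pmf (map_pmf (\<lambda>a. (s0, a)) (\<sigma> [] s0))
      else measure_pmf
        (bind_pmf (T (fst (\<omega> (i - 1))) (snd (\<omega> (i - 1))))
          (\<lambda>t. map_pmf (\<lambda>b. (t, b)) (\<sigma> (map \<omega> [0..<i]) t))))"

definition path_measure ::
  "('s \<Rightarrow> 'a \<Rightarrow> 's pmf) \<Rightarrow> ('s, 'a) strategy \<Rightarrow> 's \<Rightarrow> (nat \<Rightarrow> 's \<times> 'a) measure"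
where
  "path_measure T \<sigma> s0 =
     projective_family.lim UNIV
       (Ionescu_Tulcea.CI (step_kernel T \<sigma> s0) (\<lambda>_. count_space UNIV))
       (\<lambda>_. count_space UNIV)"

text \<open>Total transition function of the original MDP (only used at legal actions).\<close>
definition trans :: "('s \<Rightarrow> 'a \<Rightarrow> 's pmf option) \<Rightarrow> 's \<Rightarrow> 'a \<Rightarrow> 's pmf" where
  "trans P s a = the (P s a)"

definition safe_paths :: "'s set \<Rightarrow> (nat \<Rightarrow> 's \<times> 'a) set" where
  "safe_paths Bad = {\<omega>. \<forall>i. fst (\<omega> i) \<notin> Bad}"

definition Pr_safe ::
  "('s \<Rightarrow> 'a \<Rightarrow> 's pmf option) \<Rightarrow> 's set \<Rightarrow> ('s, 'a) strategy \<Rightarrow> 's \<Rightarrow> real" where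
  "Pr_safe P Bad \<sigma> s = measure (path_measure (trans P) \<sigma> s) (safe_paths Bad)"

definition Val :: "('s \<Rightarrow> 'a \<Rightarrow> 's pmf option) \<Rightarrow> 's set \<Rightarrow> 's \<Rightarrow> real" where
  "Val P Bad s = (SUP \<sigma>\<in>{\<sigma>. is_strategy P \<sigma>}. Pr_safe P Bad \<sigma> s)"

definition opt_safe_strategies ::
  "('s \<Rightarrow> 'a \<Rightarrow> 's pmf option) \<Rightarrow> 's set \<Rightarrow> 's \<Rightarrow> ('s, 'a) strategy set" where
  "opt_safe_strategies P Bad s =
     {\<sigma>. is_strategy P \<sigma> \<and> Pr_safe P Bad \<sigma> s = Val P Bad s}"

definition reward_n :: "('s \<Rightarrow> 'a \<Rightarrow> real) \<Rightarrow> nat \<Rightarrow> (nat \<Rightarrow> 's \<times> 'a) \<Rightarrow> real" where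
  "reward_n R n \<omega> = (\<Sum>i<n. R (fst (\<omega> i)) (snd (\<omega> i)))"

definition cond_MP ::
  "('s \<Rightarrow> 'a \<Rightarrow> 's pmf option) \<Rightarrow> ('s \<Rightarrow> 'a \<Rightarrow> real) \<Rightarrow> 's set \<Rightarrow> ('s, 'a) strategy \<Rightarrow> 's \<Rightarrow> ereal"
where
  "cond_MP P R Bad \<sigma> s =
     liminf (\<lambda>n. ereal ((1 / real n) *
        (\<integral>\<omega>. reward_n R n \<omega> * indicator (safe_paths Bad) \<omega> \<partial>path_measure (trans P) \<sigma> s)
        / Pr_safe P Bad \<sigma> s))"

definition exp_MP ::
  "('s \<Rightarrow> 'a \<Rightarrow> 's pmf) \<Rightarrow> ('s \<Rightarrow> 'a \<Rightarrow> real) \<Rightarrow> ('s, 'a) strategy \<Rightarrow> 's \<Rightarrow> ereal" where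
  "exp_MP T R \<sigma> s =
     liminf (\<lambda>n. ereal ((1 / real n) * (\<integral>\<omega>. reward_n R n \<omega> \<partial>path_measure T \<sigma> s)))"

definition Opt :: "('s::finite \<Rightarrow> 'a \<Rightarrow> 's pmf option) \<Rightarrow> 's set \<Rightarrow> ('s \<times> 'a) set" where
  "Opt P Bad = {(s, a). legal P s a \<and>
      Val P Bad s = (\<Sum>t\<in>UNIV. pmf (the (P s a)) t * Val P Bad t)}"

text \<open>Elsewhere P' is undefined in the paper;
  we fill in an arbitrary value (Dirac at s), which is never used by strategies
  of M' on paths of M' (they only play Opt actions and stay in S').\<close>
definition pruned_states :: "('s::finite \<Rightarrow> 'a \<Rightarrow> 's pmf option) \<Rightarrow> 's set \<Rightarrow> 's set" where
  "pruned_states P Bad = {s. Val P Bad s > 0}"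

definition pruned_trans :: "('s::finite \<Rightarrow> 'a \<Rightarrow> 's pmf option) \<Rightarrow> 's set \<Rightarrow> 's \<Rightarrow> 'a \<Rightarrow> 's pmf" where
  "pruned_trans P Bad s a =
     (if s \<in> pruned_states P Bad \<and> (s, a) \<in> Opt P Bad
      then embed_pmf (\<lambda>t. pmf (the (P s a)) t * Val P Bad t / Val P Bad s)
      else return_pmf s)"

text \<open>Strategies of M', identified with strategies of M playing only Opt actions
  after every finite path.\<close>
definition is_pruned_strategy ::
  "('s::finite \<Rightarrow> 'a \<Rightarrow> 's pmf option) \<Rightarrow> 's set \<Rightarrow> ('s, 'a) strategy \<Rightarrow> bool" where
  "is_pruned_strategy P Bad \<sigma> \<longleftrightarrow> (\<forall>h s. set_pmf (\<sigma> h s) \<subseteq> {a. (s, a) \<in> Opt P Bad})"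

text \<open>Rewards R' = R restricted to S'; for the paths of M' (which stay in S') we use R.\<close>
definition pruned_exp_MP ::
  "('s::finite \<Rightarrow> 'a \<Rightarrow> 's pmf option) \<Rightarrow> ('s \<Rightarrow> 'a \<Rightarrow> real) \<Rightarrow> 's set \<Rightarrow> ('s, 'a) strategy \<Rightarrow> 's \<Rightarrow> ereal"
where
  "pruned_exp_MP P R Bad \<sigma> s = exp_MP (pruned_trans P Bad) R \<sigma> s"

end

theory Submission
  imports Defs
begin

text \<open>
  By the Bellman inequality, the value \<open>Val\<close> of the current state, counted as 0 once \<open>Bad\<close>
  has been visited, is a supermartingale under every strategy, and a martingale when only
  actions from \<open>Opt\<close> are played. Hence strategies of the pruned MDP are safety-optimal;
  conversely, a safety-optimal strategy plays \<open>Opt\<close> actions almost surely along safe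
  histories, so it can be replaced by a pruned strategy without changing the probability of
  any safe prefix.

  The transitions of the pruned MDP are the Doob transform of the original ones by \<open>Val\<close>:
  the probability of a prefix in the pruned MDP is its probability in the original one,
  weighted by \<open>Val\<close> of its last state (and by whether it avoids \<open>Bad\<close>) over \<open>Val s0\<close>. For
  safety-optimal strategies this weighted probability is exactly the probability of the prefix
  followed by staying safe forever. Consequently, for pruned strategies the mean payoff in
  the pruned MDP coincides with the conditional mean payoff in the original MDP, and a maximiser
  of the former maximises the latter among all safety-optimal strategies.
\<close>

section \<open>Finite prefixes of the path measure\<close>

definition next_state_pmf ::
  "('s \<Rightarrow> 'a \<Rightarrow> 's pmf) \<Rightarrow> 's \<Rightarrow> ('s \<times> 'a) list \<Rightarrow> 's pmf" where
  "next_state_pmf T s h = (if h = [] then return_pmf s else T (fst (last h)) (snd (last h)))"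

definition next_pmf ::
  "('s \<Rightarrow> 'a \<Rightarrow> 's pmf) \<Rightarrow> ('s, 'a) strategy \<Rightarrow> 's \<Rightarrow> ('s \<times> 'a) list \<Rightarrow> ('s \<times> 'a) pmf" where
  "next_pmf T \<sigma> s h = bind_pmf (next_state_pmf T s h) (\<lambda>t. map_pmf (Pair t) (\<sigma> h t))"

primrec prefix_pmf ::
  "('s \<Rightarrow> 'a \<Rightarrow> 's pmf) \<Rightarrow> ('s, 'a) strategy \<Rightarrow> 's \<Rightarrow> nat \<Rightarrow> ('s \<times> 'a) list pmf" where
  "prefix_pmf T \<sigma> s 0 = return_pmf []"
| "prefix_pmf T \<sigma> s (Suc n) =
     bind_pmf (prefix_pmf T \<sigma> s n) (\<lambda>h. map_pmf (\<lambda>x. h @ [x]) (next_pmf T \<sigma> s h))"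

definition fun_of_list :: "nat \<Rightarrow> 'x list \<Rightarrow> nat \<Rightarrow> 'x" where
  "fun_of_list n h = (\<lambda>i. if i < n then h ! i else undefined)"

abbreviation count_spaces :: "nat \<Rightarrow> ('s \<times> 'a) measure" where
  "count_spaces \<equiv> (\<lambda>_. count_space UNIV)"

lemma length_prefix_pmf: "h \<in> set_pmf (prefix_pmf T \<sigma> s n) \<Longrightarrow> length h = n"
  by (induction n arbitrary: h) auto

lemma map_fun_of_list: "length h = n \<Longrightarrow> map (fun_of_list n h) [0..<n] = h"
  by (simp add: fun_of_list_def list_eq_iff_nth_eq)

lemma fun_of_list_in_PiE: "fun_of_list n h \<in> PiE {0..<n} (\<lambda>_. UNIV)"
  by (auto simp: fun_of_list_def PiE_def extensional_def)

lemma fun_upd_fun_of_list: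
  "length h = n \<Longrightarrow> (fun_of_list n h)(n := x) = fun_of_list (Suc n) (h @ [x])"
  by (auto simp: fun_of_list_def fun_eq_iff nth_append)

lemma PiM_count_spaces:
  "PiM {0..<n} count_spaces =
     count_space (PiE {0..<n} (\<lambda>_. UNIV :: ('s::countable \<times> 'a::countable) set))"
  using count_space_PiM_finite[of "{0..<n}" "\<lambda>_. UNIV :: ('s \<times> 'a) set"] by simp

lemma Ionescu_Tulcea_step_kernel:
  "Ionescu_Tulcea (step_kernel T \<sigma> s)
     (count_spaces :: nat \<Rightarrow> ('s::countable \<times> 'a::countable) measure)"
proof (rule Ionescu_Tulcea.intro)
  show "step_kernel T \<sigma> s i \<in> PiM {0..<i} count_spaces \<rightarrow>\<^sub>M subprob_algebra (count_space UNIV)"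
    for i
    unfolding PiM_count_spaces measurable_count_space_eq1
    by (auto simp: step_kernel_def measure_pmf_in_subprob_space)
  show "prob_space (step_kernel T \<sigma> s i \<omega>)" for i \<omega>
    unfolding step_kernel_def if_distrib[of measure_pmf, symmetric]
    by (rule measure_pmf.prob_space_axioms)
qed

lemma step_kernel_fun_of_list:
  assumes "length h = n"
  shows "step_kernel T \<sigma> s n (fun_of_list n h) = measure_pmf (next_pmf T \<sigma> s h)"
proof (cases "n = 0")
  case False
  then have "h \<noteq> []" and "fun_of_list n h (n - 1) = last h"
    using assms by (auto simp: fun_of_list_def last_conv_nth)
  then show ?thesis
    using False assms by (simp add: step_kernel_def next_pmf_def next_state_pmf_def map_fun_of_list)
qed (use assms in \<open>simp add: step_kernel_def next_pmf_def next_state_pmf_def bind_return_pmf\<close>)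

lemma eP_step_kernel_fun_of_list:
  fixes T :: "'s::countable \<Rightarrow> 'a::countable \<Rightarrow> 's pmf"
  assumes "length h = n"
  shows "Ionescu_Tulcea.eP (step_kernel T \<sigma> s) count_spaces n (fun_of_list n h) =
    distr (map_pmf (\<lambda>x. h @ [x]) (next_pmf T \<sigma> s h)) (PiM {0..<Suc n} count_spaces)
      (fun_of_list (Suc n))"
proof -
  interpret IT: Ionescu_Tulcea "step_kernel T \<sigma> s" count_spaces
    by (rule Ionescu_Tulcea_step_kernel)
  have "fun_upd (fun_of_list n h) n = (\<lambda>x. fun_of_list (Suc n) (h @ [x]))"
    using fun_upd_fun_of_list[OF assms] by (simp add: fun_eq_iff)
  then show ?thesis
    unfolding IT.eP_def step_kernel_fun_of_list[OF assms] map_pmf_rep_eq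
    by (subst distr_distr) (auto simp: PiM_count_spaces fun_of_list_in_PiE comp_def)
qed

lemma Ionescu_Tulcea_C_eq_prefix_pmf:
  fixes T :: "'s::countable \<Rightarrow> 'a::countable \<Rightarrow> 's pmf"
  shows "Ionescu_Tulcea.C (step_kernel T \<sigma> s) count_spaces 0 n (\<lambda>_. undefined) =
    distr (prefix_pmf T \<sigma> s n) (PiM {0..<n} count_spaces) (fun_of_list n)"
proof -
  interpret IT: Ionescu_Tulcea "step_kernel T \<sigma> s" count_spaces
    by (rule Ionescu_Tulcea_step_kernel)
  have meas: "(fun_of_list m :: ('s \<times> 'a) list \<Rightarrow> _) \<in> count_space UNIV \<rightarrow>\<^sub>M PiM {0..<m} count_spaces"
    for m
    unfolding PiM_count_spaces measurable_count_space_eq1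
    by (intro Pi_I) (simp only: space_count_space fun_of_list_in_PiE)
  show ?thesis
  proof (induction n)
    case 0
    have "fun_of_list 0 ([] :: ('s \<times> 'a) list) = (\<lambda>_. undefined)" by (simp add: fun_of_list_def)
    with distr_return[OF meas, of "[]" 0] show ?case by (simp add: return_pmf.rep_eq)
  next
    case (Suc n)
    have step: "IT.eP n (fun_of_list n h) =
        distr (map_pmf (\<lambda>x. h @ [x]) (next_pmf T \<sigma> s h)) (PiM {0..<Suc n} count_spaces)
          (fun_of_list (Suc n))" if "h \<in> set_pmf (prefix_pmf T \<sigma> s n)" for h
      using eP_step_kernel_fun_of_list[OF length_prefix_pmf[OF that]] .
    have "IT.C 0 (Suc n) (\<lambda>_. undefined) = IT.C 0 n (\<lambda>_. undefined) \<bind> IT.eP n"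
      by simp
    also have "\<dots> = measure_pmf (prefix_pmf T \<sigma> s n) \<bind> (\<lambda>h. IT.eP n (fun_of_list n h))"
      unfolding Suc by (rule bind_distr[OF _ IT.measurable_eP])
        (auto simp: PiM_count_spaces fun_of_list_in_PiE)
    also have "\<dots> = measure_pmf (prefix_pmf T \<sigma> s n) \<bind>
        (\<lambda>h. distr (map_pmf (\<lambda>x. h @ [x]) (next_pmf T \<sigma> s h)) (PiM {0..<Suc n} count_spaces)
               (fun_of_list (Suc n)))"
    proof (rule bind_measure_pmf_cong)
      show "IT.eP n (fun_of_list n h) \<in> space (subprob_algebra (PiM {0..<Suc n} count_spaces))" for h
        using IT.measurable_eP[of n] by (rule measurable_space)
          (simp add: PiM_count_spaces fun_of_list_in_PiE)
      show "distr (map_pmf (\<lambda>x. h @ [x]) (next_pmf T \<sigma> s h)) (PiM {0..<Suc n} count_spaces)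
          (fun_of_list (Suc n)) \<in> space (subprob_algebra (PiM {0..<Suc n} count_spaces))" for h
        by (auto simp: space_subprob_algebra PiM_count_spaces fun_of_list_in_PiE PiE_eq_empty_iff
            intro!: subprob_space.subprob_space_distr measure_pmf.subprob_space_axioms)
    qed (rule step)
    also have "\<dots> = distr (measure_pmf (prefix_pmf T \<sigma> s n) \<bind>
        (\<lambda>h. measure_pmf (map_pmf (\<lambda>x. h @ [x]) (next_pmf T \<sigma> s h))))
        (PiM {0..<Suc n} count_spaces) (fun_of_list (Suc n))"
      by (rule distr_bind[symmetric, where K="count_space UNIV"])
        (auto simp: PiM_count_spaces fun_of_list_in_PiE measure_pmf_in_subprob_space)
    also have "\<dots> = distr (prefix_pmf T \<sigma> s (Suc n)) (PiM {0..<Suc n} count_spaces)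
        (fun_of_list (Suc n))"
      by (simp add: measure_pmf_bind)
    finally show ?case .
  qed
qed

lemma prefix_event_eq_prod_emb:
  "{\<omega>. map \<omega> [0..<n] \<in> Y} =
     prod_emb UNIV (count_spaces :: nat \<Rightarrow> ('s::countable \<times> 'a::countable) measure) {0..<n}
       {f \<in> PiE {0..<n} (\<lambda>_. UNIV). map f [0..<n] \<in> Y}"
proof -
  have restrict: "map (restrict \<omega> {0..<n}) [0..<n] = map \<omega> [0..<n]" for \<omega> :: "nat \<Rightarrow> 's \<times> 'a"
    by (intro map_cong) auto
  show ?thesis by (auto simp: prod_emb_def PiE_def extensional_def restrict)
qed

lemma sets_path_measure:
  "sets (path_measure T \<sigma> (s :: 's::countable)) =
     sets (PiM UNIV (count_spaces :: nat \<Rightarrow> ('s \<times> 'a::countable) measure))"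
proof -
  interpret IT: Ionescu_Tulcea "step_kernel T \<sigma> s" count_spaces
    by (rule Ionescu_Tulcea_step_kernel)
  show ?thesis unfolding path_measure_def by (rule IT.PF.sets_lim)
qed

lemma space_path_measure:
  "space (path_measure T \<sigma> (s :: 's::countable)) = (UNIV :: (nat \<Rightarrow> 's \<times> 'a::countable) set)"
proof -
  have "space (PiM UNIV (count_spaces :: nat \<Rightarrow> ('s \<times> 'a) measure)) = UNIV"
    by (auto simp: space_PiM PiE_def extensional_def)
  then show ?thesis using sets_eq_imp_space_eq[OF sets_path_measure] by metis
qed

lemma prefix_event_in_sets:
  "{\<omega>. map \<omega> [0..<n] \<in> Y} \<in> sets (path_measure T \<sigma> (s :: 's::countable)
     :: (nat \<Rightarrow> 's \<times> 'a::countable) measure)"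
  unfolding sets_path_measure prefix_event_eq_prod_emb
  by (rule measurable_prod_emb) (auto simp: PiM_count_spaces)

lemma emeasure_path_measure_prefix:
  fixes T :: "'s::countable \<Rightarrow> 'a::countable \<Rightarrow> 's pmf"
  shows "emeasure (path_measure T \<sigma> s) {\<omega>. map \<omega> [0..<n] \<in> Y} =
    emeasure (prefix_pmf T \<sigma> s n) Y"
proof -
  interpret IT: Ionescu_Tulcea "step_kernel T \<sigma> s" count_spaces
    by (rule Ionescu_Tulcea_step_kernel)
  define X where "X = {f \<in> PiE {0..<n} (\<lambda>_. UNIV :: ('s \<times> 'a) set). map f [0..<n] \<in> Y}"
  have X: "X \<in> sets (PiM {0..<n} count_spaces)" by (auto simp: PiM_count_spaces X_def)
  have Y: "fun_of_list n -` X \<inter> set_pmf (prefix_pmf T \<sigma> s n) = Y \<inter> set_pmf (prefix_pmf T \<sigma> s n)"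
    using length_prefix_pmf by (fastforce simp: X_def fun_of_list_in_PiE map_fun_of_list)
  have "emeasure (path_measure T \<sigma> s) {\<omega>. map \<omega> [0..<n] \<in> Y} =
      emeasure IT.PF.lim (IT.PF.emb UNIV {0..<n} X)"
    unfolding path_measure_def prefix_event_eq_prod_emb X_def ..
  also have "\<dots> = emeasure (IT.C 0 n (\<lambda>_. undefined)) (IT.PF.emb {0..<n} {0..<n} X)"
    by (subst IT.lim[OF _ X], simp, rule IT.emeasure_CI[OF _ X], simp)
  also have "IT.PF.emb {0..<n} {0..<n} X = X"
    by (rule prod_emb_id) (auto simp: X_def)
  also have "emeasure (IT.C 0 n (\<lambda>_. undefined)) X =
      emeasure (prefix_pmf T \<sigma> s n) (fun_of_list n -` X)"
    unfolding Ionescu_Tulcea_C_eq_prefix_pmf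
    by (subst emeasure_distr[OF _ X]) (auto simp: PiM_count_spaces fun_of_list_in_PiE)
  also have "\<dots> = emeasure (prefix_pmf T \<sigma> s n) Y"
    by (simp only: emeasure_Int_set_pmf[symmetric, of _ "fun_of_list n -` X"] Y emeasure_Int_set_pmf)
  finally show ?thesis .
qed

lemma measure_path_measure_prefix:
  fixes T :: "'s::countable \<Rightarrow> 'a::countable \<Rightarrow> 's pmf"
  shows "measure (path_measure T \<sigma> s) {\<omega>. map \<omega> [0..<n] \<in> Y} = measure_pmf.prob (prefix_pmf T \<sigma> s n) Y"
  by (simp add: measure_def emeasure_path_measure_prefix)

lemma prob_space_path_measure:
  "prob_space (path_measure T \<sigma> (s :: 's::countable) :: (nat \<Rightarrow> 's \<times> 'a::countable) measure)"
proof (rule prob_spaceI)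
  have "space (path_measure T \<sigma> s) = {\<omega>. map \<omega> [0..<0] \<in> (UNIV :: ('s \<times> 'a) list set)}"
    by (simp add: space_path_measure)
  then show "emeasure (path_measure T \<sigma> s) (space (path_measure T \<sigma> s)) = 1"
    by (simp only: emeasure_path_measure_prefix) simp
qed

section \<open>Probabilities of finite prefixes\<close>

declare prefix_pmf.simps(2) [simp del]

definition histories :: "nat \<Rightarrow> 'x list set" where
  "histories n = {h. length h = n}"

lemma finite_histories [simp]: "finite (histories n :: 'x::finite list set)"
  using finite_lists_length_eq[of "UNIV :: 'x set" n] by (simp add: histories_def)

lemma histories_0 [simp]: "histories 0 = {[]}"
  by (auto simp: histories_def)

lemma sum_histories_Suc:
  "(\<Sum>g\<in>histories (Suc n). f g) = (\<Sum>h\<in>histories n. \<Sum>x\<in>UNIV. f (h @ [x :: 'x::finite]))"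
proof -
  have "histories (Suc n) = (\<lambda>(h, x). h @ [x]) ` (histories n \<times> UNIV)"
    by (force simp: histories_def length_Suc_conv_rev)
  moreover have "inj_on (\<lambda>(h, x). h @ [x :: 'x]) (histories n \<times> UNIV)"
    by (auto simp: inj_on_def)
  ultimately have "sum f (histories (Suc n)) = sum (f \<circ> (\<lambda>(h, x). h @ [x])) (histories n \<times> UNIV)"
    by (metis sum.reindex)
  then show ?thesis by (simp add: sum.cartesian_product comp_def case_prod_beta')
qed

lemma sum_UNIV_prod:
  "(\<Sum>x\<in>(UNIV :: ('x::finite \<times> 'y::finite) set). f x) = (\<Sum>a\<in>UNIV. \<Sum>b\<in>UNIV. f (a, b))"
  by (simp add: sum.cartesian_product)

lemma sum_pmf_UNIV: "(\<Sum>x\<in>UNIV. pmf M x) = (1 :: real)" for M :: "'x::finite pmf"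
  by (rule sum_pmf_eq_1) auto

lemma sum_pmf_return_mult: "(\<Sum>t\<in>UNIV. pmf (return_pmf s) t * f t) = (f s :: real)"
  for s :: "'s::finite"
  by (simp add: pmf_return indicator_def)

lemma set_prefix_pmf_subset: "set_pmf (prefix_pmf T \<sigma> s n) \<subseteq> histories n"
  using length_prefix_pmf by (auto simp: histories_def)

lemma pmf_prefix_pmf_length: "length h \<noteq> n \<Longrightarrow> pmf (prefix_pmf T \<sigma> s n) h = 0"
  using length_prefix_pmf by (metis pmf_eq_0_set_pmf)

lemma pmf_prefix_pmf_0: "pmf (prefix_pmf T \<sigma> s 0) h = (if h = [] then 1 else 0)"
  by (simp add: pmf_return)

lemma pmf_prefix_pmf_snoc:
  "pmf (prefix_pmf T \<sigma> s (Suc n)) (h @ [x]) = pmf (prefix_pmf T \<sigma> s n) h * pmf (next_pmf T \<sigma> s h) x"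
proof -
  have "pmf (prefix_pmf T \<sigma> s (Suc n)) (h @ [x]) =
      (\<integral>g. pmf (map_pmf (\<lambda>y. g @ [y]) (next_pmf T \<sigma> s g)) (h @ [x]) \<partial>prefix_pmf T \<sigma> s n)"
    by (simp add: pmf_bind prefix_pmf.simps)
  also have "\<dots> = (\<Sum>g\<in>{h}. pmf (map_pmf (\<lambda>y. g @ [y]) (next_pmf T \<sigma> s g)) (h @ [x]) *
      pmf (prefix_pmf T \<sigma> s n) g)"
    by (rule integral_measure_pmf_real) (auto simp: pmf_eq_0_set_pmf)
  also have "\<dots> = pmf (prefix_pmf T \<sigma> s n) h * pmf (next_pmf T \<sigma> s h) x"
    using pmf_map_inj'[of "\<lambda>y. h @ [y]" "next_pmf T \<sigma> s h" x] by (simp add: inj_def)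
  finally show ?thesis .
qed

lemma pmf_next_pmf:
  "pmf (next_pmf T \<sigma> s h) (t, b) = pmf (next_state_pmf T s h) t * pmf (\<sigma> h t) b"
proof -
  have "pmf (next_pmf T \<sigma> s h) (t, b) =
      (\<integral>t'. pmf (map_pmf (Pair t') (\<sigma> h t')) (t, b) \<partial>next_state_pmf T s h)"
    by (simp add: next_pmf_def pmf_bind)
  also have "\<dots> = (\<Sum>t'\<in>{t}. pmf (map_pmf (Pair t') (\<sigma> h t')) (t, b) * pmf (next_state_pmf T s h) t')"
    by (rule integral_measure_pmf_real) (auto simp: pmf_eq_0_set_pmf)
  finally show ?thesis by (simp add: pmf_map_inj' inj_def)
qed

lemma pmf_prefix_pmf_1: "pmf (prefix_pmf T \<sigma> s (Suc 0)) [(t, b)] = (if t = s then pmf (\<sigma> [] s) b else 0)"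
  using pmf_prefix_pmf_snoc[of T \<sigma> s 0 "[]" "(t, b)"]
  by (simp add: pmf_prefix_pmf_0 pmf_next_pmf next_state_pmf_def pmf_return)

definition strategy_after :: "('s, 'a) strategy \<Rightarrow> 's \<times> 'a \<Rightarrow> ('s, 'a) strategy" where
  "strategy_after \<sigma> x = (\<lambda>h. \<sigma> (x # h))"

lemma next_pmf_Cons:
  "g \<noteq> [] \<Longrightarrow> next_pmf T \<sigma> s (x # g) = next_pmf T (strategy_after \<sigma> x) t g"
  by (simp add: next_pmf_def next_state_pmf_def strategy_after_def)

lemma sum_next_pmf_strategy_after:
  fixes T :: "'s::finite \<Rightarrow> 'a \<Rightarrow> 's pmf" and \<sigma> :: "('s, 'a) strategy" and s a
  defines "\<tau> \<equiv> strategy_after \<sigma> (s, a)"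
  shows "(\<Sum>t\<in>UNIV. pmf (T s a) t * (pmf (prefix_pmf T \<tau> t n) g * pmf (next_pmf T \<tau> t g) x)) =
    (\<Sum>t\<in>UNIV. pmf (T s a) t * pmf (prefix_pmf T \<tau> t n) g) * pmf (next_pmf T \<sigma> s ((s, a) # g)) x"
proof (cases "g = []")
  case False
  then show ?thesis
    by (simp add: next_pmf_Cons[OF False, of T \<sigma> s "(s, a)", symmetric] \<tau>_def
        sum_distrib_left mult_ac)
next
  case True
  obtain t0 b where x: "x = (t0, b)" by fastforce
  have "pmf (T s a) t * pmf (next_pmf T \<tau> t []) x =
      (if t = t0 then pmf (next_pmf T \<sigma> s [(s, a)]) x else 0)" for t
    by (simp add: x pmf_next_pmf next_state_pmf_def pmf_return \<tau>_def strategy_after_def)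
  then show ?thesis using True sum_pmf_UNIV[of "T s a"]
    by (cases "n = 0") (simp_all add: pmf_prefix_pmf_0 pmf_prefix_pmf_length)
qed

lemma pmf_prefix_pmf_Cons:
  fixes T :: "'s::finite \<Rightarrow> 'a \<Rightarrow> 's pmf"
  shows "pmf (prefix_pmf T \<sigma> s (Suc n)) ((s', a) # g) = (if s' = s then pmf (\<sigma> [] s) a *
      (\<Sum>t\<in>UNIV. pmf (T s a) t * pmf (prefix_pmf T (strategy_after \<sigma> (s, a)) t n) g) else 0)"
proof (induction n arbitrary: g)
  case 0
  show ?case
    using pmf_prefix_pmf_1[of T \<sigma> s s' a] sum_pmf_UNIV[of "T s a"]
    by (cases "g = []") (auto simp: pmf_prefix_pmf_0 pmf_prefix_pmf_length)
next
  case (Suc n)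
  define \<tau> where "\<tau> = strategy_after \<sigma> (s, a)"
  show ?case
  proof (cases g rule: rev_cases)
    case Nil
    then show ?thesis by (simp add: pmf_prefix_pmf_length)
  next
    case (snoc g' x)
    have factor: "(\<Sum>t\<in>UNIV. pmf (T s a) t * (pmf (prefix_pmf T \<tau> t n) g' * pmf (next_pmf T \<tau> t g') x)) =
        (\<Sum>t\<in>UNIV. pmf (T s a) t * pmf (prefix_pmf T \<tau> t n) g') * pmf (next_pmf T \<sigma> s ((s, a) # g')) x"
      unfolding \<tau>_def by (rule sum_next_pmf_strategy_after)
    have "pmf (prefix_pmf T \<sigma> s (Suc (Suc n))) ((s', a) # g) =
        pmf (prefix_pmf T \<sigma> s (Suc n)) ((s', a) # g') * pmf (next_pmf T \<sigma> s ((s', a) # g')) x"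
      using pmf_prefix_pmf_snoc[of T \<sigma> s "Suc n" "(s', a) # g'" x] snoc by simp
    also have "\<dots> = (if s' = s then pmf (\<sigma> [] s) a *
        (\<Sum>t\<in>UNIV. pmf (T s a) t * pmf (prefix_pmf T \<tau> t (Suc n)) g) else 0)"
      using factor by (simp add: Suc.IH snoc pmf_prefix_pmf_snoc \<tau>_def)
    finally show ?thesis by (simp add: \<tau>_def)
  qed
qed

lemma prob_prefix_pmf:
  fixes T :: "'s::finite \<Rightarrow> 'a::finite \<Rightarrow> 's pmf"
  shows "measure_pmf.prob (prefix_pmf T \<sigma> s n) Y = (\<Sum>h\<in>histories n \<inter> Y. pmf (prefix_pmf T \<sigma> s n) h)"
proof -
  have "measure_pmf.prob (prefix_pmf T \<sigma> s n) Y = measure_pmf.prob (prefix_pmf T \<sigma> s n) (histories n \<inter> Y)"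
    using set_prefix_pmf_subset[of T \<sigma> s n] by (metis Int_absorb1 Int_assoc Int_commute measure_Int_set_pmf)
  then show ?thesis by (simp add: measure_measure_pmf_finite)
qed

lemma prob_prefix_pmf_Cons_image:
  fixes T :: "'s::finite \<Rightarrow> 'a::finite \<Rightarrow> 's pmf"
  shows "measure_pmf.prob (prefix_pmf T \<sigma> s (Suc n)) ((#) (s', a) ` A) = (if s' = s then pmf (\<sigma> [] s) a *
      (\<Sum>t\<in>UNIV. pmf (T s a) t * measure_pmf.prob (prefix_pmf T (strategy_after \<sigma> (s, a)) t n) A) else 0)"
proof -
  define p where "p t g = pmf (prefix_pmf T (strategy_after \<sigma> (s, a)) t n) g" for t g
  have "histories (Suc n) \<inter> (#) (s', a) ` A = (#) (s', a) ` (histories n \<inter> A)"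
    by (auto simp: histories_def)
  then have "measure_pmf.prob (prefix_pmf T \<sigma> s (Suc n)) ((#) (s', a) ` A) =
      (\<Sum>g\<in>histories n \<inter> A. pmf (prefix_pmf T \<sigma> s (Suc n)) ((s', a) # g))"
    by (simp add: prob_prefix_pmf sum.reindex inj_on_def)
  also have "\<dots> = (if s' = s then pmf (\<sigma> [] s) a *
      (\<Sum>g\<in>histories n \<inter> A. \<Sum>t\<in>UNIV. pmf (T s a) t * p t g) else 0)"
    by (simp add: pmf_prefix_pmf_Cons p_def sum_distrib_left)
  also have "\<dots> = (if s' = s then pmf (\<sigma> [] s) a *
      (\<Sum>t\<in>UNIV. pmf (T s a) t * (\<Sum>g\<in>histories n \<inter> A. p t g)) else 0)"
    by (simp add: sum.swap[of _ "histories n \<inter> A"] sum_distrib_left)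
  finally show ?thesis by (simp add: p_def prob_prefix_pmf)
qed

lemma hd_prefix_pmf: "h \<in> set_pmf (prefix_pmf T \<sigma> s n) \<Longrightarrow> h \<noteq> [] \<Longrightarrow> fst (hd h) = s"
proof (induction n arbitrary: h)
  case (Suc n)
  then obtain h' x where "h' \<in> set_pmf (prefix_pmf T \<sigma> s n)" "x \<in> set_pmf (next_pmf T \<sigma> s h')"
    and "h = h' @ [x]"
    by (auto simp: prefix_pmf.simps)
  with Suc.IH show ?case by (cases "h' = []") (auto simp: next_pmf_def next_state_pmf_def)
qed simp

lemma last_prefix_pmf:
  "h \<in> set_pmf (prefix_pmf T \<sigma> s n) \<Longrightarrow> h \<noteq> [] \<Longrightarrow> snd (last h) \<in> set_pmf (\<sigma> (butlast h) (fst (last h)))"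
proof (induction n arbitrary: h)
  case (Suc n)
  then show ?case by (auto simp: next_pmf_def prefix_pmf.simps)
qed simp

lemma prefix_pmf_cong:
  assumes "\<And>g x. (if g = [] then x = t else fst (hd g) = t) \<Longrightarrow> \<sigma>1 g x = \<sigma>2 g x"
  shows "prefix_pmf T \<sigma>1 t n = prefix_pmf T \<sigma>2 t n"
proof (induction n)
  case (Suc n)
  have "next_pmf T \<sigma>1 t h = next_pmf T \<sigma>2 t h" if "h \<in> set_pmf (prefix_pmf T \<sigma>2 t n)" for h
    using assms assms[of "[]" t] hd_prefix_pmf[OF that]
    by (cases "h = []") (auto simp: next_pmf_def next_state_pmf_def bind_return_pmf)
  then show ?case by (simp add: Suc prefix_pmf.simps cong: bind_pmf_cong)
qed simp

definition cylinder :: "('s \<times> 'a) list \<Rightarrow> (nat \<Rightarrow> 's \<times> 'a) set" where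
  "cylinder h = {\<omega>. map \<omega> [0..<length h] = h}"

lemma cylinder_in_sets:
  "cylinder h \<in> sets (path_measure T \<sigma> (s :: 's::countable) :: (nat \<Rightarrow> 's \<times> 'a::countable) measure)"
  using prefix_event_in_sets[of "length h" "{h}"] by (simp add: cylinder_def)

lemma measure_cylinder:
  fixes T :: "'s::countable \<Rightarrow> 'a::countable \<Rightarrow> 's pmf"
  shows "measure (path_measure T \<sigma> s) (cylinder h) = pmf (prefix_pmf T \<sigma> s (length h)) h"
  using measure_path_measure_prefix[of T \<sigma> s "length h" "{h}"]
  by (simp add: cylinder_def measure_pmf_single)

lemma integral_prefix_indicator:
  fixes T :: "'s::finite \<Rightarrow> 'a::finite \<Rightarrow> 's pmf"
  assumes E: "E \<in> sets (path_measure T \<sigma> s)"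
  shows "(\<integral>\<omega>. f (map \<omega> [0..<n]) * indicator E \<omega> \<partial>path_measure T \<sigma> s) =
    (\<Sum>h\<in>histories n. f h * measure (path_measure T \<sigma> s) (E \<inter> cylinder h))"
proof -
  interpret prob_space "path_measure T \<sigma> s" by (rule prob_space_path_measure)
  have split: "f (map \<omega> [0..<n]) * indicator E \<omega> =
      (\<Sum>h\<in>histories n. f h * indicator (E \<inter> cylinder h) \<omega>)" for \<omega>
  proof -
    have "(\<Sum>h\<in>histories n. f h * indicator (E \<inter> cylinder h) \<omega>) =
        (\<Sum>h\<in>histories n. if h = map \<omega> [0..<n] then f h * indicator E \<omega> else 0)"
      by (intro sum.cong refl) (auto simp: histories_def cylinder_def indicator_def)
    also have "\<dots> = f (map \<omega> [0..<n]) * indicator E \<omega>"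
      by (subst sum.delta, simp) (simp add: histories_def)
    finally show ?thesis ..
  qed
  have "E \<inter> cylinder h \<in> sets (path_measure T \<sigma> s)" for h
    by (rule sets.Int[OF E cylinder_in_sets])
  then have int: "integrable (path_measure T \<sigma> s) (\<lambda>\<omega>. f h * indicator (E \<inter> cylinder h) \<omega> :: real)"
    for h by (simp add: integrable_indicator_iff space_path_measure emeasure_finite less_top[symmetric])
  have "(\<integral>\<omega>. (\<Sum>h\<in>histories n. f h * indicator (E \<inter> cylinder h) \<omega>) \<partial>path_measure T \<sigma> s) =
      (\<Sum>h\<in>histories n. \<integral>\<omega>. f h * indicator (E \<inter> cylinder h) \<omega> \<partial>path_measure T \<sigma> s)"
    by (rule Bochner_Integration.integral_sum[OF int])
  then show ?thesis unfolding split by (simp add: space_path_measure)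
qed

lemma integral_prefix:
  fixes T :: "'s::finite \<Rightarrow> 'a::finite \<Rightarrow> 's pmf"
  shows "(\<integral>\<omega>. f (map \<omega> [0..<n]) \<partial>path_measure T \<sigma> s) = (\<Sum>h\<in>histories n. f h * pmf (prefix_pmf T \<sigma> s n) h)"
proof -
  have "UNIV \<in> sets (path_measure T \<sigma> s)"
    using sets.top[of "path_measure T \<sigma> s"] by (simp add: space_path_measure)
  from integral_prefix_indicator[OF this, of f n]
  have "(\<integral>\<omega>. f (map \<omega> [0..<n]) \<partial>path_measure T \<sigma> s) =
      (\<Sum>h\<in>histories n. f h * measure (path_measure T \<sigma> s) (cylinder h))"
    by simp
  also have "\<dots> = (\<Sum>h\<in>histories n. f h * pmf (prefix_pmf T \<sigma> s n) h)"
    by (intro sum.cong refl) (simp add: measure_cylinder histories_def)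
  finally show ?thesis .
qed

section \<open>Safety probabilities\<close>

definition safe_history :: "'s set \<Rightarrow> ('s \<times> 'a) list \<Rightarrow> bool" where
  "safe_history Bad h \<longleftrightarrow> (\<forall>x\<in>set h. fst x \<notin> Bad)"

lemma safe_history_simps [simp]:
  "safe_history Bad []"
  "safe_history Bad (x # h) \<longleftrightarrow> fst x \<notin> Bad \<and> safe_history Bad h"
  "safe_history Bad (h @ [x]) \<longleftrightarrow> safe_history Bad h \<and> fst x \<notin> Bad"
  by (auto simp: safe_history_def)

definition safe_extensions :: "'s set \<Rightarrow> ('s \<times> 'a) list \<Rightarrow> ('s \<times> 'a) list set" where
  "safe_extensions Bad h = {g. safe_history Bad g \<and> take (length h) g = h}"

lemma safe_extensions_Cons:
  "safe_extensions Bad ((s, a) # h) = (if s \<in> Bad then {} else (#) (s, a) ` safe_extensions Bad h)"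
proof -
  have "take (Suc (length h)) g = (s, a) # h \<longleftrightarrow> (\<exists>g'. g = (s, a) # g' \<and> take (length h) g' = h)" for g
    by (cases g) auto
  then show ?thesis by (auto simp: safe_extensions_def)
qed

definition Pr_safe_prefix ::
  "('s \<Rightarrow> 'a \<Rightarrow> 's pmf option) \<Rightarrow> 's set \<Rightarrow> ('s, 'a) strategy \<Rightarrow> 's \<Rightarrow> ('s \<times> 'a) list \<Rightarrow> real" where
  "Pr_safe_prefix P Bad \<sigma> s h = measure (path_measure (trans P) \<sigma> s) (safe_paths Bad \<inter> cylinder h)"

lemma Pr_safe_prefix_Nil: "Pr_safe_prefix P Bad \<sigma> s [] = Pr_safe P Bad \<sigma> s"
  by (simp add: Pr_safe_prefix_def Pr_safe_def cylinder_def)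

lemma safe_paths_in_sets:
  "safe_paths Bad \<in> sets (path_measure T \<sigma> (s :: 's::countable) :: (nat \<Rightarrow> 's \<times> 'a::countable) measure)"
proof -
  have "safe_paths Bad = (\<Inter>N. {\<omega>. map \<omega> [0..<N] \<in> {h. safe_history Bad h}})"
    by (auto simp: safe_paths_def safe_history_def) (metis atLeastLessThan_iff less_add_Suc1 zero_le)
  also have "\<dots> \<in> sets (path_measure T \<sigma> s)"
    by (rule sets.countable_INT') (auto simp only: intro!: image_subsetI prefix_event_in_sets)
  finally show ?thesis .
qed

lemma Pr_safe_prefix_limit:
  fixes P :: "'s::countable \<Rightarrow> 'a::countable \<Rightarrow> 's pmf option"
  shows "(\<lambda>N. measure_pmf.prob (prefix_pmf (trans P) \<sigma> s (N + length h)) (safe_extensions Bad h))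
    \<longlonglongrightarrow> Pr_safe_prefix P Bad \<sigma> s h"
proof -
  let ?M = "path_measure (trans P) \<sigma> s"
  interpret prob_space ?M by (rule prob_space_path_measure)
  define A where "A N = {\<omega>. map \<omega> [0..<N + length h] \<in> safe_extensions Bad h}" for N
  have A_eq: "A N = {\<omega>. (\<forall>i<N + length h. fst (\<omega> i) \<notin> Bad) \<and> map \<omega> [0..<length h] = h}" for N
    by (auto simp: A_def safe_extensions_def safe_history_def take_map)
  have "(\<lambda>N. measure ?M (A N)) \<longlonglongrightarrow> measure ?M (\<Inter>N. A N)"
  proof (rule Lim_measure_decseq)
    show "range A \<subseteq> sets ?M" unfolding A_def using prefix_event_in_sets by blast
    show "decseq A" unfolding decseq_def A_eq by auto
  qed (simp add: emeasure_finite)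
  moreover have "(\<Inter>N. A N) = safe_paths Bad \<inter> cylinder h"
    unfolding A_eq by (auto simp: safe_paths_def cylinder_def) (metis add_Suc less_add_Suc1)
  ultimately show ?thesis
    by (simp add: A_def measure_path_measure_prefix Pr_safe_prefix_def)
qed

lemma Pr_safe_limit:
  fixes P :: "'s::countable \<Rightarrow> 'a::countable \<Rightarrow> 's pmf option"
  shows "(\<lambda>N. measure_pmf.prob (prefix_pmf (trans P) \<sigma> s N) {h. safe_history Bad h}) \<longlonglongrightarrow> Pr_safe P Bad \<sigma> s"
  using Pr_safe_prefix_limit[of P \<sigma> s "[]" Bad] by (simp add: Pr_safe_prefix_Nil safe_extensions_def)

lemma sum_Pr_safe_prefix:
  fixes P :: "'s::finite \<Rightarrow> 'a::finite \<Rightarrow> 's pmf option"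
  shows "(\<Sum>h\<in>histories n. Pr_safe_prefix P Bad \<sigma> s h) = Pr_safe P Bad \<sigma> s"
proof -
  let ?M = "path_measure (trans P) \<sigma> s"
  interpret prob_space ?M by (rule prob_space_path_measure)
  have "safe_paths Bad = (\<Union>h\<in>histories n. safe_paths Bad \<inter> cylinder h)"
    by (auto simp: histories_def cylinder_def)
  then have "measure ?M (safe_paths Bad) = measure ?M (\<Union>h\<in>histories n. safe_paths Bad \<inter> cylinder h)"
    by (rule arg_cong)
  also have "\<dots> =
      (\<Sum>h\<in>histories n. measure ?M (safe_paths Bad \<inter> cylinder h))"
  proof (rule finite_measure_finite_Union)
    show "(\<lambda>h. safe_paths Bad \<inter> cylinder h) ` histories n \<subseteq> events"
      using safe_paths_in_sets cylinder_in_sets by blast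
    show "disjoint_family_on (\<lambda>h. safe_paths Bad \<inter> cylinder h) (histories n)"
      by (auto simp: disjoint_family_on_def histories_def cylinder_def)
  qed simp
  finally show ?thesis by (simp add: Pr_safe_def Pr_safe_prefix_def)
qed

lemma Pr_safe_prefix_Cons:
  fixes P :: "'s::finite \<Rightarrow> 'a::finite \<Rightarrow> 's pmf option"
  shows "Pr_safe_prefix P Bad \<sigma> s ((s', a) # h) = (if s' = s \<and> s \<notin> Bad then pmf (\<sigma> [] s) a *
    (\<Sum>t\<in>UNIV. pmf (trans P s a) t * Pr_safe_prefix P Bad (strategy_after \<sigma> (s, a)) t h) else 0)"
proof -
  define F where "F q = (if s' = s \<and> s \<notin> Bad
      then pmf (\<sigma> [] s) a * (\<Sum>t\<in>UNIV. pmf (trans P s a) t * q t) else 0)"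
    for q :: "'s \<Rightarrow> real"
  let ?pr = "\<lambda>t N. measure_pmf.prob (prefix_pmf (trans P) (strategy_after \<sigma> (s, a)) t (N + length h))
      (safe_extensions Bad h)"
  have "measure_pmf.prob (prefix_pmf (trans P) \<sigma> s (N + length ((s', a) # h)))
      (safe_extensions Bad ((s', a) # h)) =
      F (\<lambda>t. ?pr t N)" for N
    by (auto simp: F_def safe_extensions_Cons prob_prefix_pmf_Cons_image)
  moreover have "(\<lambda>N. F (\<lambda>t. ?pr t N)) \<longlonglongrightarrow> F (\<lambda>t. Pr_safe_prefix P Bad (strategy_after \<sigma> (s, a)) t h)"
  proof (cases "s' = s \<and> s \<notin> Bad")
    case True
    then show ?thesis unfolding F_def if_P[OF True] by (intro tendsto_intros Pr_safe_prefix_limit)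
  next
    case False
    then show ?thesis unfolding F_def if_not_P[OF False] by simp
  qed
  ultimately have "(\<lambda>N. measure_pmf.prob (prefix_pmf (trans P) \<sigma> s (N + length ((s', a) # h)))
      (safe_extensions Bad ((s', a) # h))) \<longlonglongrightarrow> F (\<lambda>t. Pr_safe_prefix P Bad (strategy_after \<sigma> (s, a)) t h)"
    by simp
  then show ?thesis
    unfolding F_def by (rule LIMSEQ_unique[OF Pr_safe_prefix_limit])
qed

lemma Pr_safe_unfold:
  fixes P :: "'s::finite \<Rightarrow> 'a::finite \<Rightarrow> 's pmf option"
  shows "Pr_safe P Bad \<sigma> s = (if s \<in> Bad then 0 else
    \<Sum>a\<in>UNIV. pmf (\<sigma> [] s) a * (\<Sum>t\<in>UNIV. pmf (trans P s a) t * Pr_safe P Bad (strategy_after \<sigma> (s, a)) t))"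
proof -
  have "Pr_safe P Bad \<sigma> s = (\<Sum>x\<in>UNIV. Pr_safe_prefix P Bad \<sigma> s [x])"
    using sum_Pr_safe_prefix[of P Bad \<sigma> s 1] by (simp add: sum_histories_Suc)
  also have "\<dots> = (\<Sum>s'\<in>UNIV. \<Sum>a\<in>UNIV. Pr_safe_prefix P Bad \<sigma> s [(s', a)])"
    by (rule sum_UNIV_prod)
  also have "\<dots> = (\<Sum>s'\<in>UNIV. if s' = s then \<Sum>a\<in>UNIV. if s \<notin> Bad then pmf (\<sigma> [] s) a *
      (\<Sum>t\<in>UNIV. pmf (trans P s a) t * Pr_safe_prefix P Bad (strategy_after \<sigma> (s, a)) t []) else 0 else 0)"
    by (intro sum.cong refl) (simp add: Pr_safe_prefix_Cons)
  finally show ?thesis by (cases "s \<in> Bad") (simp_all add: Pr_safe_prefix_Nil)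
qed

lemma Pr_safe_Bad:
  fixes P :: "'s::finite \<Rightarrow> 'a::finite \<Rightarrow> 's pmf option"
  shows "s \<in> Bad \<Longrightarrow> Pr_safe P Bad \<sigma> s = 0"
  by (simp add: Pr_safe_unfold)

lemma Pr_safe_nonneg: "0 \<le> Pr_safe P Bad \<sigma> s"
  by (simp add: Pr_safe_def)

lemma Pr_safe_le_1:
  fixes P :: "'s::countable \<Rightarrow> 'a::countable \<Rightarrow> 's pmf option"
  shows "Pr_safe P Bad \<sigma> s \<le> 1"
proof -
  interpret prob_space "path_measure (trans P) \<sigma> s"
    by (rule prob_space_path_measure)
  show ?thesis by (simp add: Pr_safe_def)
qed

lemma Pr_safe_cong:
  fixes P :: "'s::countable \<Rightarrow> 'a::countable \<Rightarrow> 's pmf option"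
  assumes "\<And>g x. (if g = [] then x = t else fst (hd g) = t) \<Longrightarrow> \<sigma>1 g x = \<sigma>2 g x"
  shows "Pr_safe P Bad \<sigma>1 t = Pr_safe P Bad \<sigma>2 t"
  using Pr_safe_limit[of P \<sigma>1 t Bad] Pr_safe_limit[of P \<sigma>2 t Bad]
  by (simp add: prefix_pmf_cong[OF assms] LIMSEQ_unique)

section \<open>The optimal safety value\<close>

lemma is_strategy_after: "is_strategy P \<sigma> \<Longrightarrow> is_strategy P (strategy_after \<sigma> x)"
  by (auto simp: is_strategy_def strategy_after_def)

lemma is_strategy_if_pruned: "is_pruned_strategy P Bad \<sigma> \<Longrightarrow> is_strategy P \<sigma>"
  by (auto simp: is_pruned_strategy_def is_strategy_def Opt_def)

locale mdp_with_sinks =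
  fixes P :: "'s::finite \<Rightarrow> 'a::finite \<Rightarrow> 's pmf option" and Bad :: "'s set"
  assumes legal_action_exists: "\<And>s. \<exists>a. legal P s a"
    and sinks: "\<And>s a. s \<in> Bad \<Longrightarrow> legal P s a \<Longrightarrow> P s a = Some (return_pmf s)"
begin

abbreviation T :: "'s \<Rightarrow> 'a \<Rightarrow> 's pmf" where
  "T \<equiv> trans P"

lemma trans_Bad: "s \<in> Bad \<Longrightarrow> legal P s a \<Longrightarrow> T s a = return_pmf s"
  by (simp add: trans_def sinks)

lemma strategy_exists: "\<exists>\<sigma>. is_strategy P \<sigma>"
proof
  show "is_strategy P (\<lambda>_ s. return_pmf (SOME a. legal P s a))"
    using legal_action_exists by (auto simp: is_strategy_def intro: someI_ex)
qed

lemma bdd_above_Pr_safe: "bdd_above ((\<lambda>\<sigma>. Pr_safe P Bad \<sigma> s) ` \<Sigma>)"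
  by (rule bdd_aboveI[where M=1]) (auto simp: Pr_safe_le_1)

lemma Pr_safe_le_Val: "is_strategy P \<sigma> \<Longrightarrow> Pr_safe P Bad \<sigma> s \<le> Val P Bad s"
  unfolding Val_def by (rule cSUP_upper[OF _ bdd_above_Pr_safe]) simp

lemma Val_nonneg: "0 \<le> Val P Bad s"
  using strategy_exists Pr_safe_le_Val Pr_safe_nonneg by (meson order_trans)

lemma Val_le_1: "Val P Bad s \<le> 1"
  unfolding Val_def using strategy_exists by (intro cSUP_least) (auto simp: Pr_safe_le_1)

lemma Val_Bad: "s \<in> Bad \<Longrightarrow> Val P Bad s = 0"
  unfolding Val_def using strategy_exists Val_nonneg[of s, unfolded Val_def]
  by (intro antisym cSUP_least) (auto simp: Pr_safe_Bad)

lemma Pr_safe_first_action: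
  assumes "legal P s a" and "s \<notin> Bad" and "\<And>t. is_strategy P (\<tau> t)"
  obtains \<sigma> where "is_strategy P \<sigma>"
    and "Pr_safe P Bad \<sigma> s = (\<Sum>t\<in>UNIV. pmf (T s a) t * Pr_safe P Bad (\<tau> t) t)"
proof -
  obtain \<sigma>0 where \<sigma>0: "is_strategy P \<sigma>0" using strategy_exists by blast
  \<comment> \<open>\<open>fst (hd (tl h @ [(x, undefined)]))\<close> is the state reached by the first step.\<close>
  define \<sigma> where "\<sigma> h x = (if h = [] then if x = s then return_pmf a else \<sigma>0 h x
      else \<tau> (fst (hd (tl h @ [(x, undefined)]))) (tl h) x)" for h x
  have "is_strategy P \<sigma>"
    using assms(1,3) \<sigma>0 by (auto simp: is_strategy_def \<sigma>_def)
  moreover have "Pr_safe P Bad (strategy_after \<sigma> (s, a)) t = Pr_safe P Bad (\<tau> t) t" for t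
    by (rule Pr_safe_cong) (auto simp: strategy_after_def \<sigma>_def split: if_splits)
  then have "Pr_safe P Bad \<sigma> s = (\<Sum>t\<in>UNIV. pmf (T s a) t * Pr_safe P Bad (\<tau> t) t)"
    using assms(2) by (subst Pr_safe_unfold) (simp add: \<sigma>_def pmf_return indicator_def)
  ultimately show ?thesis by (rule that)
qed

lemma expected_Val_le_Val:
  assumes legal: "legal P s a"
  shows "(\<Sum>t\<in>UNIV. pmf (T s a) t * Val P Bad t) \<le> Val P Bad s"
proof (cases "s \<in> Bad")
  case True
  then show ?thesis by (simp add: trans_Bad[OF True legal] sum_pmf_return_mult)
next
  case False
  show ?thesis
  proof (rule field_le_epsilon)
    fix e :: real assume "0 < e"
    have "\<forall>t. \<exists>\<tau>. is_strategy P \<tau> \<and> Val P Bad t - e < Pr_safe P Bad \<tau> t"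
    proof
      fix t
      have ne: "{\<sigma>. is_strategy P \<sigma>} \<noteq> {}" using strategy_exists by blast
      have "Val P Bad t - e < Val P Bad t" using \<open>0 < e\<close> by simp
      then show "\<exists>\<tau>. is_strategy P \<tau> \<and> Val P Bad t - e < Pr_safe P Bad \<tau> t"
        unfolding Val_def less_cSUP_iff[OF ne bdd_above_Pr_safe] by auto
    qed
    then have "\<exists>\<tau>. \<forall>t. is_strategy P (\<tau> t) \<and> Val P Bad t - e < Pr_safe P Bad (\<tau> t) t"
      by (rule choice)
    then obtain \<tau> where "\<forall>t. is_strategy P (\<tau> t) \<and> Val P Bad t - e < Pr_safe P Bad (\<tau> t) t"
      by blast
    then have \<tau>: "\<And>t. is_strategy P (\<tau> t)" "\<And>t. Val P Bad t - e < Pr_safe P Bad (\<tau> t) t"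
      by auto
    obtain \<sigma> where \<sigma>: "is_strategy P \<sigma>"
      and Pr_\<sigma>: "Pr_safe P Bad \<sigma> s = (\<Sum>t\<in>UNIV. pmf (T s a) t * Pr_safe P Bad (\<tau> t) t)"
      by (rule Pr_safe_first_action[OF legal False \<tau>(1)])
    have "(\<Sum>t\<in>UNIV. pmf (T s a) t * Val P Bad t) - e = (\<Sum>t\<in>UNIV. pmf (T s a) t * (Val P Bad t - e))"
      by (simp add: right_diff_distrib sum_subtractf sum_distrib_right[symmetric] sum_pmf_UNIV)
    also have "\<dots> \<le> Pr_safe P Bad \<sigma> s"
      unfolding Pr_\<sigma> by (intro sum_mono mult_left_mono) (auto intro: less_imp_le \<tau>(2))
    also have "\<dots> \<le> Val P Bad s" by (rule Pr_safe_le_Val[OF \<sigma>])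
    finally show "(\<Sum>t\<in>UNIV. pmf (T s a) t * Val P Bad t) \<le> Val P Bad s + e" by simp
  qed
qed

lemma Pr_safe_le_expected_Val_bound:
  assumes \<sigma>: "is_strategy P \<sigma>" and "s \<notin> Bad"
    and bound: "\<And>a. legal P s a \<Longrightarrow> (\<Sum>t\<in>UNIV. pmf (T s a) t * Val P Bad t) \<le> c"
  shows "Pr_safe P Bad \<sigma> s \<le> c"
proof -
  have "Pr_safe P Bad \<sigma> s =
      (\<Sum>a\<in>UNIV. pmf (\<sigma> [] s) a * (\<Sum>t\<in>UNIV. pmf (T s a) t * Pr_safe P Bad (strategy_after \<sigma> (s, a)) t))"
    using \<open>s \<notin> Bad\<close> by (subst Pr_safe_unfold) simp
  also have "\<dots> \<le> (\<Sum>a\<in>UNIV. pmf (\<sigma> [] s) a * c)"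
  proof (intro sum_mono)
    fix a
    show "pmf (\<sigma> [] s) a * (\<Sum>t\<in>UNIV. pmf (T s a) t * Pr_safe P Bad (strategy_after \<sigma> (s, a)) t) \<le>
        pmf (\<sigma> [] s) a * c"
    proof (cases "a \<in> set_pmf (\<sigma> [] s)")
      case True
      then have "legal P s a" using \<sigma> by (auto simp: is_strategy_def)
      have "(\<Sum>t\<in>UNIV. pmf (T s a) t * Pr_safe P Bad (strategy_after \<sigma> (s, a)) t) \<le>
          (\<Sum>t\<in>UNIV. pmf (T s a) t * Val P Bad t)"
        by (intro sum_mono mult_left_mono Pr_safe_le_Val is_strategy_after \<sigma>) auto
      also have "\<dots> \<le> c" by (rule bound[OF \<open>legal P s a\<close>])
      finally show ?thesis by (intro mult_left_mono) auto
    qed (simp add: set_pmf_eq)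
  qed
  also have "\<dots> = c" by (simp add: sum_distrib_right[symmetric] sum_pmf_UNIV)
  finally show ?thesis .
qed

lemma Val_le_expected_Val_bound:
  assumes "s \<notin> Bad" and "\<And>a. legal P s a \<Longrightarrow> (\<Sum>t\<in>UNIV. pmf (T s a) t * Val P Bad t) \<le> c"
  shows "Val P Bad s \<le> c"
  unfolding Val_def
proof (rule cSUP_least)
  show "{\<sigma>. is_strategy P \<sigma>} \<noteq> {}" using strategy_exists by blast
next
  fix \<sigma> assume "\<sigma> \<in> {\<sigma>. is_strategy P \<sigma>}"
  then have "is_strategy P \<sigma>" by simp
  from this assms show "Pr_safe P Bad \<sigma> s \<le> c" by (rule Pr_safe_le_expected_Val_bound)
qed

lemma Opt_iff: "(s, a) \<in> Opt P Bad \<longleftrightarrow> legal P s a \<and> Val P Bad s = (\<Sum>t\<in>UNIV. pmf (T s a) t * Val P Bad t)"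
  by (simp add: Opt_def trans_def)

lemma Opt_nonempty: "\<exists>a. (s, a) \<in> Opt P Bad"
proof -
  define F where "F a = (\<Sum>t\<in>UNIV. pmf (T s a) t * Val P Bad t)" for a
  define A where "A = {a. legal P s a}"
  have A: "finite A" "A \<noteq> {}" using legal_action_exists by (auto simp: A_def)
  then have "Max (F ` A) \<in> F ` A" by (intro Max_in) auto
  then obtain a0 where a0: "a0 \<in> A" "F a0 = Max (F ` A)" by (metis imageE)
  have F_le: "F a \<le> F a0" if "legal P s a" for a
    unfolding a0(2) using that A by (intro Max_ge) (auto simp: A_def)
  show ?thesis
  proof (cases "s \<in> Bad")
    case True
    have "legal P s a0" using a0(1) by (simp add: A_def)
    moreover from this have "Val P Bad s = (\<Sum>t\<in>UNIV. pmf (T s a0) t * Val P Bad t)"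
      by (simp add: trans_Bad[OF True] sum_pmf_return_mult)
    ultimately show ?thesis unfolding Opt_iff by blast
  next
    case False
    have "Val P Bad s \<le> F a0"
      using False F_le by (intro Val_le_expected_Val_bound) (simp_all add: F_def)
    moreover have "legal P s a0" using a0(1) by (simp add: A_def)
    moreover from this have "F a0 \<le> Val P Bad s"
      unfolding F_def by (rule expected_Val_le_Val)
    ultimately have "legal P s a0 \<and> Val P Bad s = F a0" by simp
    then show ?thesis unfolding Opt_iff F_def by blast
  qed
qed

end

section \<open>The value process\<close>

definition last_state :: "'s \<Rightarrow> ('s \<times> 'a) list \<Rightarrow> 's" where
  "last_state s h = (if h = [] then s else fst (last h))"

lemma last_Opt_if_pruned:
  assumes "is_pruned_strategy P Bad \<sigma>" and "h \<in> set_pmf (prefix_pmf T \<sigma> s n)" and "h \<noteq> []"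
  shows "(fst (last h), snd (last h)) \<in> Opt P Bad"
  using last_prefix_pmf[OF assms(2,3)] assms(1) unfolding is_pruned_strategy_def by blast

context mdp_with_sinks
begin

definition safe_Val :: "'s \<Rightarrow> ('s \<times> 'a) list \<Rightarrow> real" where
  "safe_Val s h = (if safe_history Bad h then Val P Bad (last_state s h) else 0)"

definition safe_Val_next :: "'s \<Rightarrow> ('s \<times> 'a) list \<Rightarrow> real" where
  "safe_Val_next s h =
     (if safe_history Bad h then \<Sum>t\<in>UNIV. pmf (next_state_pmf T s h) t * Val P Bad t else 0)"

lemma safe_Val_Nil [simp]: "safe_Val s [] = Val P Bad s"
  by (simp add: safe_Val_def last_state_def)

lemma safe_Val_snoc: "safe_Val s (h @ [(t, b)]) = (if safe_history Bad h then Val P Bad t else 0)"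
  by (auto simp: safe_Val_def last_state_def Val_Bad)

lemma safe_Val_next_Nil [simp]: "safe_Val_next s [] = Val P Bad s"
  by (simp add: safe_Val_next_def next_state_pmf_def sum_pmf_return_mult)

lemma safe_Val_next_Cons:
  "s \<notin> Bad \<Longrightarrow> g \<noteq> [] \<Longrightarrow> safe_Val_next s ((s, a) # g) = safe_Val_next t g"
  by (simp add: safe_Val_next_def next_state_pmf_def)

lemma safe_Val_next_nonneg: "0 \<le> safe_Val_next s h"
  unfolding safe_Val_next_def by (auto intro!: sum_nonneg mult_nonneg_nonneg Val_nonneg)

lemma expectation_safe_Val_snoc:
  "(\<Sum>x\<in>UNIV. pmf (next_pmf T \<sigma> s h) x * safe_Val s (h @ [x])) = safe_Val_next s h"
proof -
  have step: "(\<Sum>b\<in>UNIV. pmf (next_state_pmf T s h) t * pmf (\<sigma> h t) b * c) =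
      pmf (next_state_pmf T s h) t * c"
    for t and c :: real
    using sum_pmf_UNIV[of "\<sigma> h t"] by (simp add: sum_distrib_left[symmetric] sum_distrib_right[symmetric])
  have "(\<Sum>x\<in>UNIV. pmf (next_pmf T \<sigma> s h) x * safe_Val s (h @ [x])) =
      (\<Sum>t\<in>UNIV. \<Sum>b\<in>UNIV. pmf (next_state_pmf T s h) t * pmf (\<sigma> h t) b *
        (if safe_history Bad h then Val P Bad t else 0))"
    by (simp add: sum_UNIV_prod pmf_next_pmf safe_Val_snoc)
  also have "\<dots> = safe_Val_next s h"
    by (simp only: step) (simp add: safe_Val_next_def)
  finally show ?thesis .
qed

lemma safe_Val_next_le_safe_Val:
  assumes "is_strategy P \<sigma>" and "h \<in> set_pmf (prefix_pmf T \<sigma> s n)"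
  shows "safe_Val_next s h \<le> safe_Val s h"
proof (cases "h = []")
  case False
  have "legal P (fst (last h)) (snd (last h))"
    using last_prefix_pmf[OF assms(2) False] assms(1) by (auto simp: is_strategy_def)
  then show ?thesis
    using False expected_Val_le_Val
    by (simp add: safe_Val_def safe_Val_next_def next_state_pmf_def last_state_def)
qed simp

lemma safe_Val_next_eq_safe_Val:
  assumes "h \<noteq> [] \<Longrightarrow> (fst (last h), snd (last h)) \<in> Opt P Bad"
  shows "safe_Val_next s h = safe_Val s h"
proof (cases "h = []")
  case False
  from assms[OF False] have "(\<Sum>t\<in>UNIV. pmf (T (fst (last h)) (snd (last h))) t * Val P Bad t) =
      Val P Bad (fst (last h))"
    unfolding Opt_iff by simp
  with False show ?thesis by (simp add: safe_Val_def safe_Val_next_def next_state_pmf_def last_state_def)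
qed simp

lemma expectation_safe_Val_Suc:
  "(\<Sum>h\<in>histories (Suc n). pmf (prefix_pmf T \<sigma> s (Suc n)) h * safe_Val s h) =
    (\<Sum>h\<in>histories n. pmf (prefix_pmf T \<sigma> s n) h * safe_Val_next s h)"
  by (simp add: sum_histories_Suc pmf_prefix_pmf_snoc mult.assoc sum_distrib_left[symmetric]
      expectation_safe_Val_snoc)

lemma expectation_safe_Val_le:
  assumes "is_strategy P \<sigma>"
  shows "(\<Sum>h\<in>histories n. pmf (prefix_pmf T \<sigma> s n) h * safe_Val s h) \<le> Val P Bad s"
proof (induction n)
  case (Suc n)
  have "(\<Sum>h\<in>histories n. pmf (prefix_pmf T \<sigma> s n) h * safe_Val_next s h) \<le>
      (\<Sum>h\<in>histories n. pmf (prefix_pmf T \<sigma> s n) h * safe_Val s h)"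
  proof (rule sum_mono)
    fix h
    show "pmf (prefix_pmf T \<sigma> s n) h * safe_Val_next s h \<le> pmf (prefix_pmf T \<sigma> s n) h * safe_Val s h"
      using safe_Val_next_le_safe_Val[OF assms, of h s n]
      by (cases "h \<in> set_pmf (prefix_pmf T \<sigma> s n)") (auto simp: set_pmf_eq intro: mult_left_mono)
  qed
  with Suc show ?case by (simp add: expectation_safe_Val_Suc)
qed (simp add: pmf_prefix_pmf_0)

lemma expectation_safe_Val_pruned:
  assumes "is_pruned_strategy P Bad \<sigma>"
  shows "(\<Sum>h\<in>histories n. pmf (prefix_pmf T \<sigma> s n) h * safe_Val s h) = Val P Bad s"
proof (induction n)
  case (Suc n)
  have "(\<Sum>h\<in>histories n. pmf (prefix_pmf T \<sigma> s n) h * safe_Val_next s h) =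
      (\<Sum>h\<in>histories n. pmf (prefix_pmf T \<sigma> s n) h * safe_Val s h)"
  proof (rule sum.cong)
    fix h
    show "pmf (prefix_pmf T \<sigma> s n) h * safe_Val_next s h = pmf (prefix_pmf T \<sigma> s n) h * safe_Val s h"
      using safe_Val_next_eq_safe_Val[OF last_Opt_if_pruned[OF assms]]
      by (cases "h \<in> set_pmf (prefix_pmf T \<sigma> s n)") (auto simp: set_pmf_eq)
  qed simp
  with Suc show ?case by (simp add: expectation_safe_Val_Suc)
qed (simp add: pmf_prefix_pmf_0)

theorem Pr_safe_pruned:
  assumes "is_pruned_strategy P Bad \<sigma>"
  shows "Pr_safe P Bad \<sigma> s = Val P Bad s"
proof (rule antisym)
  show "Pr_safe P Bad \<sigma> s \<le> Val P Bad s"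
    by (rule Pr_safe_le_Val[OF is_strategy_if_pruned[OF assms]])
  have "Val P Bad s \<le> measure_pmf.prob (prefix_pmf T \<sigma> s n) {h. safe_history Bad h}" for n
  proof -
    have "Val P Bad s = (\<Sum>h\<in>histories n. pmf (prefix_pmf T \<sigma> s n) h * safe_Val s h)"
      by (rule expectation_safe_Val_pruned[OF assms, symmetric])
    also have "\<dots> \<le> (\<Sum>h\<in>histories n. if safe_history Bad h then pmf (prefix_pmf T \<sigma> s n) h else 0)"
      by (intro sum_mono) (auto simp: safe_Val_def intro: mult_right_le_one_le Val_le_1 Val_nonneg)
    also have "\<dots> = measure_pmf.prob (prefix_pmf T \<sigma> s n) {h. safe_history Bad h}"
      by (simp add: prob_prefix_pmf sum.inter_restrict)
    finally show ?thesis .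
  qed
  then show "Val P Bad s \<le> Pr_safe P Bad \<sigma> s"
    by (intro LIMSEQ_le_const[OF Pr_safe_limit]) auto
qed

lemma sum_safe_Val_next_Cons:
  assumes "s \<notin> Bad"
  shows "(\<Sum>t\<in>UNIV. pmf (T s a) t * (pmf (prefix_pmf T \<tau> t (length g)) g * safe_Val_next t g)) =
    (\<Sum>t\<in>UNIV. pmf (T s a) t * pmf (prefix_pmf T \<tau> t (length g)) g) * safe_Val_next s ((s, a) # g)"
proof (cases "g = []")
  case True
  then show ?thesis
    using assms by (simp add: pmf_prefix_pmf_0 sum_pmf_UNIV safe_Val_next_def next_state_pmf_def)
next
  case False
  then have "safe_Val_next t g = safe_Val_next s ((s, a) # g)" for t
    using assms by (intro safe_Val_next_Cons[symmetric])
  then show ?thesis by (simp add: sum_distrib_left mult_ac)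
qed

lemma Pr_safe_prefix_le:
  assumes "is_strategy P \<sigma>"
  shows "Pr_safe_prefix P Bad \<sigma> s h \<le> pmf (prefix_pmf T \<sigma> s (length h)) h * safe_Val_next s h"
  using assms
proof (induction h arbitrary: \<sigma> s)
  case Nil
  then show ?case by (simp add: Pr_safe_prefix_Nil pmf_prefix_pmf_0 Pr_safe_le_Val)
next
  case (Cons x g)
  obtain s' a where x: "x = (s', a)" by fastforce
  show ?case
  proof (cases "s' = s \<and> s \<notin> Bad")
    case False
    then show ?thesis
      unfolding x Pr_safe_prefix_Cons if_not_P[OF False] by (simp add: safe_Val_next_nonneg)
  next
    case True
    define \<tau> where "\<tau> = strategy_after \<sigma> (s, a)"
    define p where "p t = pmf (prefix_pmf T \<tau> t (length g)) g" for t
    have factor: "(\<Sum>t\<in>UNIV. pmf (T s a) t * (p t * safe_Val_next t g)) =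
        (\<Sum>t\<in>UNIV. pmf (T s a) t * p t) * safe_Val_next s ((s, a) # g)"
      using True unfolding p_def by (intro sum_safe_Val_next_Cons) simp
    have "Pr_safe_prefix P Bad \<sigma> s (x # g) =
        pmf (\<sigma> [] s) a * (\<Sum>t\<in>UNIV. pmf (T s a) t * Pr_safe_prefix P Bad \<tau> t g)"
      using True by (simp add: x \<tau>_def Pr_safe_prefix_Cons)
    also have "\<dots> \<le> pmf (\<sigma> [] s) a * (\<Sum>t\<in>UNIV. pmf (T s a) t * (p t * safe_Val_next t g))"
      unfolding p_def \<tau>_def
      by (intro mult_left_mono sum_mono Cons.IH is_strategy_after Cons.prems) auto
    also have "\<dots> = pmf (\<sigma> [] s) a * (\<Sum>t\<in>UNIV. pmf (T s a) t * p t) * safe_Val_next s ((s, a) # g)"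
      by (simp only: factor mult.assoc)
    also have "\<dots> = pmf (prefix_pmf T \<sigma> s (length (x # g))) (x # g) * safe_Val_next s (x # g)"
      using True by (simp add: x p_def \<tau>_def pmf_prefix_pmf_Cons)
    finally show ?thesis .
  qed
qed

end

section \<open>Safety-optimal strategies\<close>

context mdp_with_sinks
begin

lemma expectation_safe_Val_next_optimal:
  assumes "is_strategy P \<sigma>" and "Pr_safe P Bad \<sigma> s = Val P Bad s"
  shows "(\<Sum>h\<in>histories n. pmf (prefix_pmf T \<sigma> s n) h * safe_Val_next s h) = Val P Bad s"
proof (rule antisym)
  show "(\<Sum>h\<in>histories n. pmf (prefix_pmf T \<sigma> s n) h * safe_Val_next s h) \<le> Val P Bad s"
    using expectation_safe_Val_le[OF assms(1), where n = "Suc n"] by (simp add: expectation_safe_Val_Suc)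
  have "Val P Bad s = (\<Sum>h\<in>histories n. Pr_safe_prefix P Bad \<sigma> s h)"
    by (simp add: sum_Pr_safe_prefix assms(2))
  also have "\<dots> \<le> (\<Sum>h\<in>histories n. pmf (prefix_pmf T \<sigma> s n) h * safe_Val_next s h)"
    using Pr_safe_prefix_le[OF assms(1)] by (intro sum_mono) (auto simp: histories_def)
  finally show "Val P Bad s \<le> (\<Sum>h\<in>histories n. pmf (prefix_pmf T \<sigma> s n) h * safe_Val_next s h)" .
qed

lemma safe_Val_next_optimal:
  assumes "is_strategy P \<sigma>" and "Pr_safe P Bad \<sigma> s = Val P Bad s"
  shows "pmf (prefix_pmf T \<sigma> s n) h * safe_Val_next s h = pmf (prefix_pmf T \<sigma> s n) h * safe_Val s h"
proof (cases "h \<in> histories n")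
  case True
  have le: "pmf (prefix_pmf T \<sigma> s n) g * safe_Val_next s g \<le>
      pmf (prefix_pmf T \<sigma> s n) g * safe_Val s g" for g
    using safe_Val_next_le_safe_Val[OF assms(1), of g s n]
    by (cases "g \<in> set_pmf (prefix_pmf T \<sigma> s n)") (auto simp: set_pmf_eq intro: mult_left_mono)
  have "(\<Sum>g\<in>histories n. pmf (prefix_pmf T \<sigma> s n) g * safe_Val s g) \<le>
      (\<Sum>g\<in>histories n. pmf (prefix_pmf T \<sigma> s n) g * safe_Val_next s g)"
    using expectation_safe_Val_le[OF assms(1)] expectation_safe_Val_next_optimal[OF assms] by simp
  with le have "(\<Sum>g\<in>histories n. pmf (prefix_pmf T \<sigma> s n) g * safe_Val_next s g) =
      (\<Sum>g\<in>histories n. pmf (prefix_pmf T \<sigma> s n) g * safe_Val s g)"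
    by (meson antisym sum_mono)
  from sum_mono_inv[OF this le True] show ?thesis by simp
qed (simp add: histories_def pmf_prefix_pmf_length)

lemma Pr_safe_prefix_optimal:
  assumes "is_strategy P \<sigma>" and "Pr_safe P Bad \<sigma> s = Val P Bad s"
  shows "Pr_safe_prefix P Bad \<sigma> s h = pmf (prefix_pmf T \<sigma> s (length h)) h * safe_Val s h"
proof -
  let ?n = "length h"
  have h: "h \<in> histories ?n" by (simp add: histories_def)
  have le: "Pr_safe_prefix P Bad \<sigma> s g \<le> pmf (prefix_pmf T \<sigma> s ?n) g * safe_Val_next s g"
    if "g \<in> histories ?n" for g
    using Pr_safe_prefix_le[OF assms(1), of s g] that by (simp add: histories_def)
  have "(\<Sum>g\<in>histories ?n. Pr_safe_prefix P Bad \<sigma> s g) =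
      (\<Sum>g\<in>histories ?n. pmf (prefix_pmf T \<sigma> s ?n) g * safe_Val_next s g)"
    by (simp add: sum_Pr_safe_prefix assms(2) expectation_safe_Val_next_optimal[OF assms])
  from sum_mono_inv[OF this le h] show ?thesis
    by (simp add: safe_Val_next_optimal[OF assms])
qed

lemma Opt_if_optimal:
  assumes "is_strategy P \<sigma>" and "Pr_safe P Bad \<sigma> s = Val P Bad s"
    and h: "h \<in> set_pmf (prefix_pmf T \<sigma> s n)" "h \<noteq> []" "safe_history Bad h"
  shows "(fst (last h), snd (last h)) \<in> Opt P Bad"
proof -
  have "safe_Val_next s h = safe_Val s h"
    using safe_Val_next_optimal[OF assms(1,2), of n h] h(1) by (simp add: set_pmf_eq)
  moreover have "legal P (fst (last h)) (snd (last h))"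
    using last_prefix_pmf[OF h(1,2)] assms(1) by (auto simp: is_strategy_def)
  ultimately show ?thesis unfolding Opt_iff
    using h(2,3) by (simp add: safe_Val_def safe_Val_next_def next_state_pmf_def last_state_def)
qed

end

section \<open>Mean payoff in the pruned MDP\<close>

definition reward_list :: "('s \<Rightarrow> 'a \<Rightarrow> real) \<Rightarrow> ('s \<times> 'a) list \<Rightarrow> real" where
  "reward_list R h = (\<Sum>x\<leftarrow>h. R (fst x) (snd x))"

lemma reward_n_eq_reward_list: "reward_n R n \<omega> = reward_list R (map \<omega> [0..<n])"
proof -
  have "reward_n R n \<omega> = (\<Sum>i\<in>set [0..<n]. R (fst (\<omega> i)) (snd (\<omega> i)))"
    by (simp add: reward_n_def atLeast0LessThan)
  also have "\<dots> = (\<Sum>i\<leftarrow>[0..<n]. R (fst (\<omega> i)) (snd (\<omega> i)))"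
    by (rule sum_set_upt_conv_sum_list_nat)
  finally show ?thesis by (simp add: reward_list_def comp_def)
qed

context mdp_with_sinks
begin

abbreviation T' :: "'s \<Rightarrow> 'a \<Rightarrow> 's pmf" where
  "T' \<equiv> pruned_trans P Bad"

lemma Val_mult_pmf_pruned_trans:
  assumes "(s, a) \<in> Opt P Bad"
  shows "Val P Bad s * pmf (T' s a) t = pmf (T s a) t * Val P Bad t"
proof (cases "Val P Bad s > 0")
  case True
  define f where "f t = pmf (T s a) t * Val P Bad t / Val P Bad s" for t
  have f_nonneg: "0 \<le> f t" for t using True by (simp add: f_def Val_nonneg)
  have "(\<Sum>t\<in>UNIV. f t) = 1"
    using assms True unfolding Opt_iff f_def by (simp add: sum_divide_distrib[symmetric])
  then have "(\<integral>\<^sup>+ t. ennreal (f t) \<partial>count_space UNIV) = 1"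
    by (subst nn_integral_count_space_finite) (auto simp: f_nonneg intro: sum_nonneg)
  then have "pmf (embed_pmf f) t = f t" by (intro pmf_embed_pmf f_nonneg)
  moreover have "T' s a = embed_pmf f"
    using assms True by (simp add: pruned_trans_def pruned_states_def f_def[abs_def] trans_def)
  ultimately show ?thesis using True by (simp add: f_def)
next
  case False
  then have Val_s: "Val P Bad s = 0" using Val_nonneg[of s] by simp
  with assms have "(\<Sum>t\<in>UNIV. pmf (T s a) t * Val P Bad t) = 0" by (simp add: Opt_iff)
  then have "pmf (T s a) t * Val P Bad t = 0"
    by (subst (asm) sum_nonneg_eq_0_iff) (auto intro: mult_nonneg_nonneg Val_nonneg)
  with Val_s show ?thesis by simp
qed

lemma Val_mult_next_state_pmf_pruned:
  assumes "h \<noteq> [] \<Longrightarrow> (fst (last h), snd (last h)) \<in> Opt P Bad"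
  shows "Val P Bad (last_state s h) * pmf (next_state_pmf T' s h) t =
    pmf (next_state_pmf T s h) t * Val P Bad t"
  using Val_mult_pmf_pruned_trans[OF assms]
  by (cases "h = []") (auto simp: next_state_pmf_def last_state_def pmf_return indicator_def)

theorem pmf_prefix_pmf_pruned_trans:
  assumes "is_pruned_strategy P Bad \<sigma>"
  shows "pmf (prefix_pmf T' \<sigma> s n) h * Val P Bad s = pmf (prefix_pmf T \<sigma> s n) h * safe_Val s h"
proof (induction n arbitrary: h)
  case (Suc n)
  show ?case
  proof (cases h rule: rev_cases)
    case Nil
    then show ?thesis by (simp add: pmf_prefix_pmf_length)
  next
    case (snoc h0 x)
    obtain t b where x: "x = (t, b)" by fastforce
    have step: "pmf (prefix_pmf T \<sigma> s n) h0 * (safe_Val s h0 * pmf (next_state_pmf T' s h0) t) =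
        pmf (prefix_pmf T \<sigma> s n) h0 * (pmf (next_state_pmf T s h0) t *
          (if safe_history Bad h0 then Val P Bad t else 0))"
    proof (cases "h0 \<in> set_pmf (prefix_pmf T \<sigma> s n)")
      case True
      show ?thesis
        using Val_mult_next_state_pmf_pruned[OF last_Opt_if_pruned[OF assms True]]
        by (simp add: safe_Val_def)
    qed (simp add: set_pmf_eq)
    have "pmf (prefix_pmf T' \<sigma> s (Suc n)) h * Val P Bad s =
        (pmf (prefix_pmf T' \<sigma> s n) h0 * Val P Bad s) * (pmf (next_state_pmf T' s h0) t * pmf (\<sigma> h0 t) b)"
      by (simp add: snoc x pmf_prefix_pmf_snoc pmf_next_pmf mult_ac)
    also have "\<dots> = (pmf (prefix_pmf T \<sigma> s n) h0 * safe_Val s h0) *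
        (pmf (next_state_pmf T' s h0) t * pmf (\<sigma> h0 t) b)"
      by (simp only: Suc.IH)
    also have "\<dots> = pmf (prefix_pmf T \<sigma> s n) h0 * (safe_Val s h0 * pmf (next_state_pmf T' s h0) t) *
        pmf (\<sigma> h0 t) b"
      by (simp only: mult.assoc)
    also have "\<dots> = pmf (prefix_pmf T \<sigma> s (Suc n)) h * safe_Val s h"
      by (simp only: step) (simp add: snoc x pmf_prefix_pmf_snoc pmf_next_pmf safe_Val_snoc mult_ac)
    finally show ?thesis .
  qed
qed (auto simp: indicator_def)

lemma integral_reward_safe_optimal:
  assumes "is_strategy P \<sigma>" and "Pr_safe P Bad \<sigma> s = Val P Bad s"
  shows "(\<integral>\<omega>. reward_n R n \<omega> * indicator (safe_paths Bad) \<omega> \<partial>path_measure T \<sigma> s) =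
    (\<Sum>h\<in>histories n. reward_list R h * (pmf (prefix_pmf T \<sigma> s n) h * safe_Val s h))"
  unfolding reward_n_eq_reward_list integral_prefix_indicator[OF safe_paths_in_sets]
  by (intro sum.cong refl)
    (auto simp: histories_def Pr_safe_prefix_optimal[OF assms, unfolded Pr_safe_prefix_def])

lemma integral_reward_pruned:
  assumes "is_pruned_strategy P Bad \<sigma>"
  shows "(\<integral>\<omega>. reward_n R n \<omega> \<partial>path_measure T' \<sigma> s) * Val P Bad s =
    (\<Sum>h\<in>histories n. reward_list R h * (pmf (prefix_pmf T \<sigma> s n) h * safe_Val s h))"
  unfolding reward_n_eq_reward_list integral_prefix sum_distrib_right
  by (simp add: mult.assoc pmf_prefix_pmf_pruned_trans[OF assms])

theorem cond_MP_eq_pruned_exp_MP: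
  assumes "is_pruned_strategy P Bad \<sigma>" and "0 < Val P Bad s"
  shows "cond_MP P R Bad \<sigma> s = pruned_exp_MP P R Bad \<sigma> s"
proof -
  have safe: "Pr_safe P Bad \<sigma> s = Val P Bad s" by (rule Pr_safe_pruned[OF assms(1)])
  have "1 / real n * (\<integral>\<omega>. reward_n R n \<omega> * indicator (safe_paths Bad) \<omega> \<partial>path_measure T \<sigma> s) /
      Pr_safe P Bad \<sigma> s = 1 / real n * (\<integral>\<omega>. reward_n R n \<omega> \<partial>path_measure T' \<sigma> s)" for n
    unfolding safe integral_reward_safe_optimal[OF is_strategy_if_pruned[OF assms(1)] safe]
      integral_reward_pruned[OF assms(1), symmetric]
    using assms(2) by simp
  then show ?thesis by (simp add: cond_MP_def pruned_exp_MP_def exp_MP_def)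
qed

definition prune_strategy :: "('s, 'a) strategy \<Rightarrow> ('s, 'a) strategy" where
  "prune_strategy \<sigma> h t = (if set_pmf (\<sigma> h t) \<subseteq> {a. (t, a) \<in> Opt P Bad} then \<sigma> h t
     else return_pmf (SOME a. (t, a) \<in> Opt P Bad))"

lemma is_pruned_prune_strategy: "is_pruned_strategy P Bad (prune_strategy \<sigma>)"
  unfolding is_pruned_strategy_def prune_strategy_def using Opt_nonempty by (auto intro: someI_ex)

lemma pmf_prefix_pmf_prune_strategy:
  assumes "is_strategy P \<sigma>" and "Pr_safe P Bad \<sigma> s = Val P Bad s"
  shows "length h = n \<Longrightarrow> safe_history Bad h \<Longrightarrow>
    pmf (prefix_pmf T (prune_strategy \<sigma>) s n) h = pmf (prefix_pmf T \<sigma> s n) h"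
proof (induction n arbitrary: h)
  case (Suc n)
  obtain h0 t b where h: "h = h0 @ [(t, b)]" "length h0 = n"
    using Suc.prems(1) by (metis length_Suc_conv_rev prod.collapse)
  have safe: "safe_history Bad h0" "t \<notin> Bad" using Suc.prems(2) h(1) by auto
  have next_eq: "pmf (next_pmf T (prune_strategy \<sigma>) s h0) (t, b) = pmf (next_pmf T \<sigma> s h0) (t, b)"
    if p0: "pmf (prefix_pmf T \<sigma> s n) h0 \<noteq> 0"
  proof (cases "pmf (next_state_pmf T s h0) t = 0")
    case False
    have "(t, b') \<in> Opt P Bad" if "b' \<in> set_pmf (\<sigma> h0 t)" for b'
    proof -
      have "h0 @ [(t, b')] \<in> set_pmf (prefix_pmf T \<sigma> s (Suc n))"
        using p0 False that by (simp add: set_pmf_iff pmf_prefix_pmf_snoc pmf_next_pmf)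
      from Opt_if_optimal[OF assms this] show ?thesis using safe by simp
    qed
    then have "prune_strategy \<sigma> h0 t = \<sigma> h0 t" by (auto simp: prune_strategy_def)
    then show ?thesis by (simp add: pmf_next_pmf)
  qed (simp add: pmf_next_pmf)
  show ?case
    using Suc.IH[OF h(2) safe(1)] next_eq
    by (cases "pmf (prefix_pmf T \<sigma> s n) h0 = 0") (simp_all add: h pmf_prefix_pmf_snoc)
qed simp

lemma cond_MP_prune_strategy:
  assumes "is_strategy P \<sigma>" and "Pr_safe P Bad \<sigma> s = Val P Bad s"
  shows "cond_MP P R Bad (prune_strategy \<sigma>) s = cond_MP P R Bad \<sigma> s"
proof -
  have pruned_opt: "is_strategy P (prune_strategy \<sigma>)" "Pr_safe P Bad (prune_strategy \<sigma>) s = Val P Bad s"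
    using is_pruned_prune_strategy by (auto intro: is_strategy_if_pruned Pr_safe_pruned)
  have "(\<Sum>h\<in>histories n. reward_list R h * (pmf (prefix_pmf T (prune_strategy \<sigma>) s n) h * safe_Val s h)) =
      (\<Sum>h\<in>histories n. reward_list R h * (pmf (prefix_pmf T \<sigma> s n) h * safe_Val s h))" for n
    using pmf_prefix_pmf_prune_strategy[OF assms]
    by (intro sum.cong refl) (auto simp: safe_Val_def histories_def)
  then show ?thesis
    by (simp add: cond_MP_def integral_reward_safe_optimal[OF assms]
        integral_reward_safe_optimal[OF pruned_opt] pruned_opt(2) assms(2))
qed

end

theorem theorem3:
  fixes P :: "'s::finite \<Rightarrow> 'a::finite \<Rightarrow> 's pmf option"
    and R :: "'s \<Rightarrow> 'a \<Rightarrow> real"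
    and Bad :: "'s set"
    and s0 :: 's
    and \<sigma>star :: "('s, 'a) strategy"
  assumes mdp: "\<forall>s. \<exists>a. legal P s a"
    and sinks: "\<forall>s\<in>Bad. (\<exists>!a. legal P s a) \<and>
                          (\<forall>a. legal P s a \<longrightarrow> P s a = Some (return_pmf s))"
    and pos: "Val P Bad s0 > 0"
    and strat: "is_pruned_strategy P Bad \<sigma>star"
    and maxim: "\<forall>\<sigma>. is_pruned_strategy P Bad \<sigma> \<longrightarrow>
                      pruned_exp_MP P R Bad \<sigma> s0 \<le> pruned_exp_MP P R Bad \<sigma>star s0"
  shows "Pr_safe P Bad \<sigma>star s0 = Val P Bad s0 \<and>
         cond_MP P R Bad \<sigma>star s0 =
           (SUP \<sigma>\<in>opt_safe_strategies P Bad s0. cond_MP P R Bad \<sigma> s0)"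
proof -
  interpret mdp_with_sinks P Bad using mdp sinks by unfold_locales auto
  have safe_opt: "Pr_safe P Bad \<sigma>star s0 = Val P Bad s0" by (rule Pr_safe_pruned[OF strat])
  have "\<sigma>star \<in> opt_safe_strategies P Bad s0"
    using safe_opt is_strategy_if_pruned[OF strat] by (simp add: opt_safe_strategies_def)
  moreover have "cond_MP P R Bad \<sigma> s0 \<le> cond_MP P R Bad \<sigma>star s0"
    if "\<sigma> \<in> opt_safe_strategies P Bad s0" for \<sigma>
  proof -
    have \<sigma>: "is_strategy P \<sigma>" "Pr_safe P Bad \<sigma> s0 = Val P Bad s0"
      using that by (auto simp: opt_safe_strategies_def)
    have "cond_MP P R Bad \<sigma> s0 = pruned_exp_MP P R Bad (prune_strategy \<sigma>) s0"
      using cond_MP_prune_strategy[OF \<sigma>] cond_MP_eq_pruned_exp_MP[OF is_pruned_prune_strategy pos]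
      by simp
    also have "\<dots> \<le> pruned_exp_MP P R Bad \<sigma>star s0"
      by (simp add: maxim is_pruned_prune_strategy)
    also have "\<dots> = cond_MP P R Bad \<sigma>star s0"
      by (rule cond_MP_eq_pruned_exp_MP[OF strat pos, symmetric])
    finally show ?thesis .
  qed
  ultimately have "cond_MP P R Bad \<sigma>star s0 = (SUP \<sigma>\<in>opt_safe_strategies P Bad s0. cond_MP P R Bad \<sigma> s0)"
    by (intro antisym SUP_upper SUP_least)
  with safe_opt show ?thesis by simp
qed

end
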